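(* For every $\delta\in\mathcal{T}_D$ and $\kappa\in\mathcal{T}_C$: (1) $[\![\delta]\!]\subseteq\mathcal{SN}$ and $[\![\kappa]\!]\subseteq\mathcal{SN}^*$; (2) for every term variable $x$ and stack $\vec N$, if $x\vec N\in\mathcal{SN}$ then $x\vec N\in[\![\delta]\!]$; (3) for every $n\ge|\kappa|$ and term variables $x_1,\dots,x_n$, the stack $x_1:\cdots:x_n$ belongs to $[\![\kappa]\!]$.
   Context: $\lambda\mu$-calculus (Parigot). Terms $M,N ::= x \mid \lambda x.M \mid MN \mid \mu\alpha.[\beta]M$ over disjoint denumerable sets of term variables and names ($\lambda$ binds $x$, $\mu$ binds $\alpha$). $M[N/x]$ is capture-avoiding substitution; structural substitution $T[\alpha\Leftarrow L]$ replaces every subterm $[\alpha]N$ of $T$ by $[\alpha]N'L$ where $N'=N[\alpha\Leftarrow L]$ (recursively), commuting with all other constructors. Reduction is the compatible closure of $(\lambda x.M)N\to M[N/x]$ and $(\mu\beta.[\gamma]M)N\to\mu\beta.(([\gamma]M)[\beta\Leftarrow N])$. $\mathcal{SN}$ is the set of terms with no infinite reduction sequence. A stack is a finite (possibly empty) sequence $\vec L=L_1:\cdots:L_k$ of terms, and $M\vec L$ denotes $ML_1\cdots L_k$; $\mathcal{SN}^*$ is the set of stacks all of whose elements are in $\mathcal{SN}$. Types: with constant $\nu$ and symbol $\omega$ (not itself a type), $\mathcal{T}_D:\ \delta ::= \nu \mid \omega\to\nu \mid \kappa\to\nu \mid \delta\wedge\delta$; $\mathcal{T}_C:\ \kappa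 ::= \delta\times\omega \mid \delta\times\kappa \mid \kappa\wedge\kappa$. Interpretation: $[\![\nu]\!]=[\![\omega\to\nu]\!]=\mathcal{SN}$; $[\![\kappa\to\nu]\!]=\{M\mid \forall\vec L\in[\![\kappa]\!].\ M\vec L\in\mathcal{SN}\}$; $[\![\delta\times\omega]\!]=\{N:\vec L\mid N\in[\![\delta]\!],\vec L\in\mathcal{SN}^*\}$; $[\![\delta\times\kappa]\!]=\{N:\vec L\mid N\in[\![\delta]\!],\vec L\in[\![\kappa]\!]\}$; $[\![\sigma\wedge\tau]\!]=[\![\sigma]\!]\cap[\![\tau]\!]$. Length: $|\delta\times\omega|=1$, $|\delta\times\kappa|=1+|\kappa|$, $|\kappa_1\wedge\kappa_2|=\max(|\kappa_1|,|\kappa_2|)$. *)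

theory Defs
  imports Main
begin

text \<open>Lambda-mu terms in locally nameless / de Bruijn form, with two separate index
spaces: term variables (bound by Lam) and names (bound by Mu).
Mu b M stands for mu alpha.[beta]M, where alpha is the name bound by this Mu
(index 0 inside M) and beta is the name with index b inside M.\<close>

datatype trm = Var nat | Lam trm | App trm trm | Mu nat trm

fun lift_t :: "nat \<Rightarrow> trm \<Rightarrow> trm" where
  "lift_t k (Var x) = Var (if x < k then x else Suc x)"
| "lift_t k (Lam M) = Lam (lift_t (Suc k) M)"
| "lift_t k (App M N) = App (lift_t k M) (lift_t k N)"
| "lift_t k (Mu b M) = Mu b (lift_t k M)"

fun lift_n :: "nat \<Rightarrow> trm \<Rightarrow> trm" where
  "lift_n k (Var x) = Var x"
| "lift_n k (Lam M) = Lam (lift_n k M)"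
| "lift_n k (App M N) = App (lift_n k M) (lift_n k N)"
| "lift_n k (Mu b M) = Mu (if b < Suc k then b else Suc b) (lift_n (Suc k) M)"

fun subst_t :: "trm \<Rightarrow> nat \<Rightarrow> trm \<Rightarrow> trm" where
  "subst_t (Var x) k N = (if x < k then Var x else if x = k then N else Var (x - 1))"
| "subst_t (Lam M) k N = Lam (subst_t M (Suc k) (lift_t 0 N))"
| "subst_t (App M1 M2) k N = App (subst_t M1 k N) (subst_t M2 k N)"
| "subst_t (Mu b M) k N = Mu b (subst_t M k (lift_n 0 N))"

text \<open>Structural substitution T[a <= L]: every [a]N becomes [a](N' L).\<close>
fun ssub :: "nat \<Rightarrow> trm \<Rightarrow> trm \<Rightarrow> trm" where
  "ssub a L (Var x) = Var x"
| "ssub a L (Lam M) = Lam (ssub a (lift_t 0 L) M)"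
| "ssub a L (App M N) = App (ssub a L M) (ssub a L N)"
| "ssub a L (Mu b M) =
     (let L' = lift_n 0 L; M' = ssub (Suc a) L' M
      in Mu b (if b = Suc a then App M' L' else M'))"

inductive red :: "trm \<Rightarrow> trm \<Rightarrow> bool" where
  beta: "red (App (Lam M) N) (subst_t M 0 N)"
| mu: "red (App (Mu b M) N)
         (let N' = lift_n 0 N; M' = ssub 0 N' M
          in Mu b (if b = 0 then App M' N' else M'))"
| lam: "red M M' \<Longrightarrow> red (Lam M) (Lam M')"
| appL: "red M M' \<Longrightarrow> red (App M N) (App M' N)"
| appR: "red N N' \<Longrightarrow> red (App M N) (App M N')"
| muC: "red M M' \<Longrightarrow> red (Mu b M) (Mu b M')"

definition SN :: "trm set" where
  "SN = {M. \<not> (\<exists>f. f 0 = M \<and> (\<forall>i. red (f i) (f (Suc i))))}"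

definition app_stack :: "trm \<Rightarrow> trm list \<Rightarrow> trm" where
  "app_stack M Ls = foldl App M Ls"

definition SNstar :: "trm list set" where
  "SNstar = {Ls. \<forall>L \<in> set Ls. L \<in> SN}"

datatype tyD = Nu | OmegaArr | KArr tyC | DAnd tyD tyD
     and tyC = DOmega tyD | DK tyD tyC | CAnd tyC tyC

fun interpD :: "tyD \<Rightarrow> trm set" and interpC :: "tyC \<Rightarrow> trm list set" where
  "interpD Nu = SN"
| "interpD OmegaArr = SN"
| "interpD (KArr k) = {M. \<forall>Ls \<in> interpC k. app_stack M Ls \<in> SN}"
| "interpD (DAnd d1 d2) = interpD d1 \<inter> interpD d2"
| "interpC (DOmega d) = {N # Ls | N Ls. N \<in> interpD d \<and> Ls \<in> SNstar}"
| "interpC (DK d k) = {N # Ls | N Ls. N \<in> interpD d \<and> Ls \<in> interpC k}"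
| "interpC (CAnd k1 k2) = interpC k1 \<inter> interpC k2"

fun lenC :: "tyC \<Rightarrow> nat" where
  "lenC (DOmega d) = 1"
| "lenC (DK d k) = Suc (lenC k)"
| "lenC (CAnd k1 k2) = max (lenC k1) (lenC k2)"

end

theory Submission
  imports Defs
begin

text \<open>A neutral term \<open>x N\<^sub>1 \<dots> N\<^sub>k\<close> has no head redex, so it reduces only inside its
arguments; hence it is strongly normalising exactly when all \<open>N\<^sub>i\<close> are. This makes every
strongly normalising neutral term an inhabitant of each \<open>\<lbrakk>\<delta>\<rbrakk>\<close> and every long enough stack of
variables an inhabitant of each \<open>\<lbrakk>\<kappa>\<rbrakk>\<close>. Conversely, applying an inhabitant of \<open>\<lbrakk>\<kappa> \<rightarrow> \<nu>\<rbrakk>\<close> to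
a stack of \<open>|\<kappa>|\<close> variables gives a strongly normalising term, so the inhabitant itself is
strongly normalising.\<close>

lemma SN_iff_termip: "M \<in> SN \<longleftrightarrow> termip red M"
proof
  assume "M \<in> SN"
  show "termip red M"
  proof (rule ccontr)
    assume "\<not> termip red M"
    have "\<exists>f. \<forall>n. (\<not> termip red (f n) \<and> (n = 0 \<longrightarrow> f n = M)) \<and> red (f n) (f (Suc n))"
    proof (rule dependent_nat_choice)
      show "\<exists>N. \<not> termip red N \<and> (0 = (0::nat) \<longrightarrow> N = M)"
        using \<open>\<not> termip red M\<close> by blast
    next
      fix N :: trm and n :: nat
      assume "\<not> termip red N \<and> (n = 0 \<longrightarrow> N = M)"
      then obtain N' where "red\<inverse>\<inverse> N' N" and "\<not> termip red N'"
        using not_accp_down by metis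
      then show "\<exists>N'. (\<not> termip red N' \<and> (Suc n = 0 \<longrightarrow> N' = M)) \<and> red N N'"
        by auto
    qed
    then obtain f where "f 0 = M" and "\<forall>n. red (f n) (f (Suc n))"
      by blast
    with \<open>M \<in> SN\<close> show False
      unfolding SN_def by blast
  qed
next
  assume "termip red M"
  then show "M \<in> SN"
  proof (induction rule: accp_induct_rule)
    case (1 M)
    show ?case
      unfolding SN_def
    proof clarify
      fix f assume "\<forall>i. red (f i) (f (Suc i))" and "M = f 0"
      then have "f (Suc 0) \<in> SN" and "\<exists>g. g 0 = f (Suc 0) \<and> (\<forall>i. red (g i) (g (Suc i)))"
        using 1 by (auto intro!: exI[of _ "\<lambda>i. f (Suc i)"])
      then show False
        unfolding SN_def by blast
    qed
  qed
qed

lemma SN_reflect: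
  assumes "\<And>M M'. red M M' \<Longrightarrow> red (F M) (F M')" and "F M \<in> SN"
  shows "M \<in> SN"
  unfolding SN_def
proof clarify
  fix f assume "M = f 0" and "\<forall>i. red (f i) (f (Suc i))"
  then have "\<exists>g. g 0 = F M \<and> (\<forall>i. red (g i) (g (Suc i)))"
    using assms(1) by (intro exI[of _ "\<lambda>i. F (f i)"]) simp
  with \<open>F M \<in> SN\<close> show False
    unfolding SN_def by blast
qed

lemma SN_AppD: "App M N \<in> SN \<Longrightarrow> M \<in> SN \<and> N \<in> SN"
  using SN_reflect[of "\<lambda>M. App M N"] SN_reflect[of "App M"] by (blast intro: red.appL red.appR)

lemma app_stack_Nil [simp]: "app_stack M [] = M"
  by (simp add: app_stack_def)

lemma app_stack_snoc [simp]: "app_stack M (Ms @ [N]) = App (app_stack M Ms) N"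
  by (simp add: app_stack_def)

lemma app_stack_append: "app_stack M (Ms @ Ls) = app_stack (app_stack M Ms) Ls"
  by (simp add: app_stack_def)

lemma SN_app_stackD: "app_stack M Ms \<in> SN \<Longrightarrow> M \<in> SN \<and> Ms \<in> SNstar"
  by (induction Ms rule: rev_induct) (auto simp: SNstar_def dest: SN_AppD)

lemma SNstar_append [simp]: "Ms @ Ls \<in> SNstar \<longleftrightarrow> Ms \<in> SNstar \<and> Ls \<in> SNstar"
  by (auto simp: SNstar_def)

lemma red_Var_False: "\<not> red (Var x) T"
  by (auto elim: red.cases)

lemma neutral_not_Lam_Mu:
  "app_stack (Var x) Ms \<noteq> Lam M" "app_stack (Var x) Ms \<noteq> Mu b M"
  by (induction Ms rule: rev_induct) auto

lemma red_neutral: "red (app_stack (Var x) Ms) T \<Longrightarrow> \<exists>Ms'. T = app_stack (Var x) Ms'"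
proof (induction Ms arbitrary: T rule: rev_induct)
  case Nil
  then show ?case by (simp add: red_Var_False)
next
  case (snoc N Ms)
  from \<open>red (app_stack (Var x) (Ms @ [N])) T\<close> show ?case
  proof (cases rule: red.cases)
    case (appL H H')
    then have "red (app_stack (Var x) Ms) H'" and "T = App H' N"
      by simp_all
    then obtain Ks where "T = App (app_stack (Var x) Ks) N"
      using snoc.IH by blast
    then have "T = app_stack (Var x) (Ks @ [N])"
      by simp
    then show ?thesis ..
  next
    case (appR _ N')
    then have "T = app_stack (Var x) (Ms @ [N'])"
      by simp
    then show ?thesis ..
  qed (simp_all add: neutral_not_Lam_Mu)
qed

text \<open>Lexicographic induction: first on the reductions of the neutral head, then on those of
the argument.\<close>

lemma termip_App_neutral:
  assumes "termip red (app_stack (Var x) Ms)" and "termip red N"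
  shows "termip red (App (app_stack (Var x) Ms) N)"
  using assms
proof (induction "app_stack (Var x) Ms" arbitrary: Ms N rule: accp_induct_rule)
  case head: 1
  from \<open>termip red N\<close> show ?case
  proof (induction rule: accp_induct_rule)
    case arg: (1 N)
    show ?case
    proof (rule accpI)
      fix T assume "red\<inverse>\<inverse> T (App (app_stack (Var x) Ms) N)"
      then have "red (App (app_stack (Var x) Ms) N) T"
        by simp
      then show "termip red T"
      proof (cases rule: red.cases)
        case (appL H')
        moreover obtain Ms' where "H' = app_stack (Var x) Ms'"
          using red_neutral \<open>red (app_stack (Var x) Ms) H'\<close> by blast
        ultimately show ?thesis
          using head arg.hyps by simp
      next
        case (appR N')
        with arg.IH show ?thesis
          by blast
      qed (simp_all add: neutral_not_Lam_Mu)
    qed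
  qed
qed

lemma SN_neutral_iff: "app_stack (Var x) Ms \<in> SN \<longleftrightarrow> Ms \<in> SNstar"
proof
  show "Ms \<in> SNstar \<Longrightarrow> app_stack (Var x) Ms \<in> SN"
  proof (induction Ms rule: rev_induct)
    case Nil
    have "termip red (Var x)"
      by (rule accpI) (simp add: red_Var_False)
    then show ?case by (simp add: SN_iff_termip)
  next
    case (snoc N Ms)
    then have "termip red (app_stack (Var x) Ms)" and "termip red N"
      by (simp_all add: SN_iff_termip SNstar_def)
    then show ?case
      by (simp add: SN_iff_termip termip_App_neutral)
  qed
qed (simp add: SN_app_stackD)

lemma Var_in_SN: "Var x \<in> SN"
  using SN_neutral_iff[of x "[]"] by (simp add: SNstar_def)

lemma map_Var_in_SNstar: "map Var xs \<in> SNstar"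
  by (auto simp: SNstar_def Var_in_SN)

lemma interp_adequate:
  shows "interpD d \<subseteq> SN \<and> (\<forall>x Ns. app_stack (Var x) Ns \<in> SN \<longrightarrow> app_stack (Var x) Ns \<in> interpD d)"
    and "interpC k \<subseteq> SNstar \<and> (\<forall>xs. lenC k \<le> length xs \<longrightarrow> map Var xs \<in> interpC k)"
proof (induction d and k)
  case (KArr k)
  have "interpD (KArr k) \<subseteq> SN"
  proof
    fix M assume "M \<in> interpD (KArr k)"
    moreover have "map Var (replicate (lenC k) 0) \<in> interpC k"
      using KArr length_replicate by (metis order_refl)
    ultimately show "M \<in> SN"
      by (auto dest: SN_app_stackD)
  qed
  moreover have "app_stack (Var x) Ns \<in> interpD (KArr k)" if "app_stack (Var x) Ns \<in> SN" for x Ns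
    using that KArr by (auto simp: SN_neutral_iff simp flip: app_stack_append)
  ultimately show ?case by blast
next
  case (DOmega d)
  have "map Var xs \<in> interpC (DOmega d)" if long: "lenC (DOmega d) \<le> length xs" for xs
  proof -
    obtain y ys where "xs = y # ys"
      using long by (cases xs) auto
    moreover have "Var y \<in> interpD d"
      using DOmega Var_in_SN[of y] by (metis app_stack_Nil)
    ultimately show ?thesis
      by (simp add: map_Var_in_SNstar)
  qed
  with DOmega show ?case
    by (auto simp: SNstar_def)
next
  case (DK d k)
  have "map Var xs \<in> interpC (DK d k)" if long: "lenC (DK d k) \<le> length xs" for xs
  proof -
    obtain y ys where "xs = y # ys"
      using long by (cases xs) auto
    moreover have "Var y \<in> interpD d"
      using DK Var_in_SN[of y] by (metis app_stack_Nil)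
    ultimately show ?thesis
      using DK long by auto
  qed
  with DK show ?case
    by (auto simp: SNstar_def subset_iff)
qed auto

theorem mainTheorem8:
  fixes d :: tyD and k :: tyC
  shows "(interpD d \<subseteq> SN \<and> interpC k \<subseteq> SNstar)
       \<and> (\<forall>x Ns. app_stack (Var x) Ns \<in> SN \<longrightarrow> app_stack (Var x) Ns \<in> interpD d)
       \<and> (\<forall>n xs. n \<ge> lenC k \<and> length xs = n \<longrightarrow> map Var xs \<in> interpC k)"
  using interp_adequate(1)[of d] interp_adequate(2)[of k] by blast

end
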